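(* Let $\Phi$ be a homogeneous Poisson point process of intensity $1$ in $\mathbb{R}^2$ with an additional point added at the origin $o$, and let $\Psi$ be an independent homogeneous Poisson point process of intensity $\lambda>0$ in $\mathbb{R}^2$. Fix $r>0$. Let $\vec G_{\lambda,r}$ be the directed graph on $\Phi$ containing $\overrightarrow{xy}$ ($x\ne y$) iff $\|x-y\|\le r$ and the closed disk of radius $\|x-y\|$ centered at $x$ contains no point of $\Psi$; let $G_{\lambda,r}$ (basic graph) contain the undirected edge $xy$ iff both $\overrightarrow{xy}$ and $\overrightarrow{yx}$ are in $\vec G_{\lambda,r}$, and $G'_{\lambda,r}$ (enhanced graph) contain $xy$ iff at least one of them is. Let $N$ and $N'$ be the degrees of $o$ in $G_{\lambda,r}$ and $G'_{\lambda,r}$. Then $$\frac{\mathbb{E}N}{\mathbb{E}N'}\ \ge\ \frac{3\pi}{5\pi+3\sqrt3}\approx 0.45,$$ i.e. at least this fraction of the edges of the enhanced graph are present in the basic graph. *)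

theory Defs
  imports "HOL-Probability.Probability"
begin

type_synonym pt = "real ^ 2"

definition cnt :: "pt set \<Rightarrow> pt set \<Rightarrow> nat" where
  "cnt X B = card (X \<inter> B)"

definition poisson_counts :: "'o measure \<Rightarrow> ('o \<Rightarrow> pt set) \<Rightarrow> real \<Rightarrow> bool" where
  "poisson_counts M X lam \<longleftrightarrow>
     (\<forall>\<omega>\<in>space M. \<forall>B. bounded B \<longrightarrow> finite (X \<omega> \<inter> B)) \<and>
     (\<forall>B \<in> sets lborel. bounded B \<longrightarrow>
        (\<lambda>\<omega>. cnt (X \<omega>) B) \<in> measurable M (count_space UNIV) \<and>
        (\<forall>k::nat. measure M {\<omega>\<in>space M. cnt (X \<omega>) B = k} =
            (lam * measure lborel B) ^ k / fact k * exp (- (lam * measure lborel B))))"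

text \<open>Joint independence: for any finite families of pairwise disjoint bounded Borel sets
  B_0..B_{n-1} and C_0..C_{n-1}, the counts of X in the B_i and of Y in the C_j are all
  mutually independent (independent increments of each process, and independence
  of the two processes).\<close>
definition indep_counts :: "'o measure \<Rightarrow> ('o \<Rightarrow> pt set) \<Rightarrow> ('o \<Rightarrow> pt set) \<Rightarrow> bool" where
  "indep_counts M X Y \<longleftrightarrow>
     (\<forall>(B :: nat \<Rightarrow> pt set) (C :: nat \<Rightarrow> pt set) n.
        (\<forall>i<n. B i \<in> sets lborel \<and> bounded (B i) \<and> C i \<in> sets lborel \<and> bounded (C i)) \<and>
        disjoint_family_on B {..<n} \<and> disjoint_family_on C {..<n} \<longrightarrow>
        prob_space.indep_vars M (\<lambda>_. count_space (UNIV :: nat set))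
          (\<lambda>i. case i of Inl j \<Rightarrow> (\<lambda>\<omega>. cnt (X \<omega>) (B j)) | Inr j \<Rightarrow> (\<lambda>\<omega>. cnt (Y \<omega>) (C j)))
          ({..<n} <+> {..<n}))"

definition dir_edge :: "real \<Rightarrow> pt set \<Rightarrow> pt \<Rightarrow> pt \<Rightarrow> bool" where
  "dir_edge r Psi x y \<longleftrightarrow> x \<noteq> y \<and> dist x y \<le> r \<and> cball x (dist x y) \<inter> Psi = {}"

definition deg_basic :: "real \<Rightarrow> pt set \<Rightarrow> pt set \<Rightarrow> nat" where
  "deg_basic r Phi Psi = card {y \<in> Phi. dir_edge r Psi 0 y \<and> dir_edge r Psi y 0}"

definition deg_enh :: "real \<Rightarrow> pt set \<Rightarrow> pt set \<Rightarrow> nat" where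
  "deg_enh r Phi Psi = card {y \<in> Phi. dir_edge r Psi 0 y \<or> dir_edge r Psi y 0}"

end

theory Submission
  imports Defs
begin

text \<open>For a point \<open>y\<close> at distance \<open>\<rho> \<le> r\<close> from \<open>0\<close>, the undirected edge \<open>0y\<close> is present iff
  the obstacles avoid both disks \<open>cball 0 \<rho>\<close> and \<open>cball y \<rho>\<close>, whose union has area at most
  \<open>(4\<pi>/3 + \<surd>3/2) \<rho>\<^sup>2\<close>, because their lens contains two \<open>60\<degree>\<close> sectors overlapping in a rhombus of
  area \<open>\<surd>3/2 \<rho>\<^sup>2\<close>. Each directed edge needs only one disk, of area \<open>\<pi> \<rho>\<^sup>2\<close>. Hence
  \<open>E N \<ge> \<integral>\<^bsub>|y|\<le>r\<^esub> exp (-\<lambda> (4\<pi>/3 + \<surd>3/2) |y|\<^sup>2) dy\<close>, while \<open>E N + E N'\<close> is the sum of the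
  expected out- and in-degree, \<open>2 \<integral>\<^bsub>|y|\<le>r\<^esub> exp (-\<lambda>\<pi>|y|\<^sup>2) dy\<close>. Substituting \<open>y = s x\<close> with
  \<open>\<pi> s\<^sup>2 = 4\<pi>/3 + \<surd>3/2\<close> gives \<open>E N + E N' \<le> 2 s\<^sup>2 E N\<close>, i.e. \<open>E N / E N' \<ge> 1 / (2 s\<^sup>2 - 1)\<close>.
  Since only the count distributions of the processes are available, the integrals are replaced
  by sums over a grid of squares of side \<open>d\<close>, and \<open>d \<rightarrow> 0\<close> at the end.\<close>

section \<open>Plane geometry\<close>

lemma inner_pt: "(x::pt) \<bullet> y = x$1 * y$1 + x$2 * y$2"
  by (simp add: inner_vec_def sum_2)

lemma norm_pt: "norm (x::pt) = sqrt (x$1^2 + x$2^2)"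
  by (simp add: norm_eq_sqrt_inner inner_pt power2_eq_square)

lemma pt_eq_iff: "(x::pt) = y \<longleftrightarrow> x$1 = y$1 \<and> x$2 = y$2"
  by (simp add: vec_eq_iff forall_2)

definition vec2 :: "real \<Rightarrow> real \<Rightarrow> pt" where "vec2 a b = vector [a, b]"

lemma vec2_nth [simp]: "vec2 a b $ 1 = a" "vec2 a b $ 2 = b"
  by (simp_all add: vec2_def)

definition rot120 :: "pt \<Rightarrow> pt" where
  "rot120 z = vec2 (- z$1 / 2 - sqrt 3 / 2 * z$2) (sqrt 3 / 2 * z$1 - z$2 / 2)"

lemma orthogonal_transformation_rot120: "orthogonal_transformation rot120"
  unfolding orthogonal_transformation_def
proof
  show "linear rot120"
    by (rule linearI) (simp_all add: rot120_def pt_eq_iff field_simps)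
  show "\<forall>v w. rot120 v \<bullet> rot120 w = v \<bullet> w"
    by (simp add: inner_pt rot120_def field_simps)
qed

lemma rot120_rot120_rot120: "rot120 (rot120 (rot120 z)) = z"
  by (simp add: rot120_def pt_eq_iff field_simps) (simp add: right_diff_distrib distrib_left mult.assoc[symmetric])

lemma norm_rot120 [simp]: "norm (rot120 z) = norm z"
  using orthogonal_transformation_rot120 orthogonal_transformation_norm by blast

definition cross2 :: "pt \<Rightarrow> pt \<Rightarrow> real" where
  "cross2 u z = u$1 * z$2 - u$2 * z$1"

lemma inner_sq_add_cross2_sq: "(z \<bullet> c)^2 + (cross2 c z)^2 = (norm z)^2 * (norm c)^2"
  by (simp add: cross2_def inner_pt norm_pt algebra_simps power2_eq_square)

text \<open>For a unit vector \<open>u\<close>, the second condition says that the angle between \<open>z\<close> and \<open>u\<close> is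
  at most \<open>60\<degree>\<close>.\<close>
definition sector :: "real \<Rightarrow> pt \<Rightarrow> pt set" where
  "sector R u = {z. norm z \<le> R \<and> norm z \<le> 2 * (z \<bullet> u)}"

lemma three_directions_cover:
  fixes a b m :: real
  assumes "a^2 + b^2 = m^2" "m \<ge> 0"
  shows "m \<le> 2*a \<or> m \<le> -a + sqrt 3 * b \<or> m \<le> -a - sqrt 3 * b"
proof (rule ccontr)
  assume H: "\<not> ?thesis"
  have "\<bar>a\<bar> \<le> m"
    using assms by (metis abs_le_square_iff abs_of_nonneg le_add_same_cancel1 zero_le_power2)
  then have "(m - 2*a)^2 * (a + m) \<ge> 0" by simp
  moreover have "(m + a)^2 - 3*b^2 = (m + a - sqrt 3 * b) * (m + a + sqrt 3 * b)"
    by (simp add: algebra_simps power2_eq_square)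
  then have "(m - 2*a) * ((m + a)^2 - 3*b^2) > 0" using H by simp
  moreover have "(m + a)^2 - 3*b^2 = 2 * (2*a - m) * (a + m)"
    using assms(1) by (simp add: algebra_simps power2_eq_square)
  then have "(m - 2*a) * ((m + a)^2 - 3*b^2) = - 2 * ((m - 2*a)^2 * (a + m))"
    by (simp add: algebra_simps power2_eq_square)
  ultimately show False by linarith
qed

lemma cball_subset_sectors:
  assumes "norm u = 1"
  shows "cball 0 R \<subseteq> sector R u \<union> sector R (rot120 u) \<union> sector R (rot120 (rot120 u))"
proof
  fix z :: pt assume z: "z \<in> cball 0 R"
  have "(z \<bullet> u)^2 + (cross2 u z)^2 = (norm z)^2"
    using inner_sq_add_cross2_sq[of z u] assms by (simp add: cross2_def algebra_simps)
  moreover have "z \<bullet> rot120 u = (- (z \<bullet> u) + sqrt 3 * cross2 u z) / 2"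
    and "z \<bullet> rot120 (rot120 u) = (- (z \<bullet> u) - sqrt 3 * cross2 u z) / 2"
    by (simp_all add: cross2_def inner_pt rot120_def field_simps)
  ultimately show "z \<in> sector R u \<union> sector R (rot120 u) \<union> sector R (rot120 (rot120 u))"
    using z three_directions_cover[of "z \<bullet> u" "cross2 u z" "norm z"] by (auto simp: sector_def)
qed

lemma sector_rot120_subset: "sector R (rot120 v) \<subseteq> rot120 ` sector R v"
proof
  fix z assume z: "z \<in> sector R (rot120 v)"
  have "rot120 (rot120 z) \<bullet> v = z \<bullet> rot120 v"
    by (simp add: inner_pt rot120_def field_simps)
  then have "rot120 (rot120 z) \<in> sector R v" using z by (simp add: sector_def)
  then show "z \<in> rot120 ` sector R v" by (metis image_eqI rot120_rot120_rot120)
qed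

lemma sector_lmeasurable: "sector R u \<in> lmeasurable"
proof (rule lmeasurable_compact)
  have "closed (sector R u)"
    unfolding sector_def by (intro closed_Collect_conj closed_Collect_le continuous_intros)
  moreover have "sector R u \<subseteq> cball 0 R" by (auto simp: sector_def)
  ultimately show "compact (sector R u)"
    by (meson bounded_cball bounded_subset compact_eq_bounded_closed)
qed

lemma measure_cball_pt: "R \<ge> 0 \<Longrightarrow> measure lebesgue (cball (x::pt) R) = pi * R^2"
  by (simp add: content_cball eval_unit_ball_vol)

lemma measure_ball_pt: "measure lborel (ball (x::pt) R) = pi * (max 0 R)^2"
  by (cases "R \<ge> 0") (simp_all add: content_ball eval_unit_ball_vol)

lemma measure_sector_ge:
  assumes u: "norm u = 1" and R: "R \<ge> 0"
  shows "measure lebesgue (sector R u) \<ge> pi * R^2 / 3"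
proof -
  have rot: "measure lebesgue (sector R (rot120 v)) \<le> measure lebesgue (sector R v)" for v
  proof -
    have "measure lebesgue (sector R (rot120 v)) \<le> measure lebesgue (rot120 ` sector R v)"
      by (rule measure_mono_fmeasurable[OF sector_rot120_subset])
         (auto intro: fmeasurableD sector_lmeasurable
               measurable_orthogonal_image[OF orthogonal_transformation_rot120])
    also have "\<dots> = measure lebesgue (sector R v)"
      by (rule measure_orthogonal_image[OF orthogonal_transformation_rot120 sector_lmeasurable])
    finally show ?thesis .
  qed
  let ?S = "\<lambda>v. measure lebesgue (sector R v)"
  have "pi * R^2 = measure lebesgue (cball (0::pt) R)" using measure_cball_pt[OF R] by simp
  also have "\<dots> \<le> measure lebesgue (sector R u \<union> sector R (rot120 u) \<union> sector R (rot120 (rot120 u)))"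
    by (rule measure_mono_fmeasurable[OF cball_subset_sectors[OF u]])
       (auto intro: fmeasurableD sector_lmeasurable)
  also have "\<dots> \<le> ?S u + ?S (rot120 u) + ?S (rot120 (rot120 u))"
    by (intro measure_Un_le[THEN order_trans] add_mono measure_Un_le order_refl)
       (auto intro: fmeasurableD sector_lmeasurable)
  also have "\<dots> \<le> 3 * ?S u"
    using rot[of u] rot[of "rot120 u"] by linarith
  finally show ?thesis by simp
qed

lemma sector_subset_lens:
  assumes c: "norm c = R" and R: "R > 0"
  shows "sector R (inverse R *\<^sub>R c) \<subseteq> cball 0 R \<inter> cball c R"
proof
  fix z assume z: "z \<in> sector R (inverse R *\<^sub>R c)"
  have z_le: "norm z \<le> R" "norm z * R \<le> 2 * (z \<bullet> c)" using z R by (auto simp: sector_def field_simps)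
  have "(norm (c - z))^2 = (norm z)^2 - 2 * (z \<bullet> c) + R^2"
    using c by (simp add: power2_norm_eq_inner inner_diff_left inner_diff_right inner_commute)
      (metis power2_norm_eq_inner)
  also have "\<dots> \<le> R^2"
    using z_le mult_left_mono[OF z_le(1), of "norm z"] by (simp add: power2_eq_square)
  finally have "norm (c - z) \<le> R" using R by (simp add: power2_le_iff_abs_le)
  then show "z \<in> cball 0 R \<inter> cball c R" using z_le by (simp add: dist_norm)
qed

lemma abs_cross2_le_of_sector:
  assumes c: "norm c = R" and R: "R > 0" and z: "z \<in> sector R (inverse R *\<^sub>R c)"
  shows "\<bar>cross2 c z\<bar> \<le> sqrt 3 * (z \<bullet> c)"
proof -
  have z_le: "norm z * R \<le> 2 * (z \<bullet> c)" using z R by (auto simp: sector_def field_simps)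
  then have "(norm z * R)^2 \<le> (2 * (z \<bullet> c))^2" using R by (intro power_mono) auto
  then have "(cross2 c z)^2 \<le> 3 * (z \<bullet> c)^2"
    using inner_sq_add_cross2_sq[of z c] c by (simp add: power_mult_distrib)
  moreover have "z \<bullet> c \<ge> 0" using z_le R by (smt (verit) mult_nonneg_nonneg norm_ge_zero)
  ultimately show ?thesis
    by (metis abs_of_nonneg real_sqrt_abs real_sqrt_le_mono real_sqrt_mult)
qed

text \<open>The sector at \<open>0\<close> towards \<open>c\<close> and the sector at \<open>c\<close> towards \<open>0\<close> meet in the rhombus
  made of the two equilateral triangles on the segment from \<open>0\<close> to \<open>c\<close>; it is the image of the
  unit square under the following matrix.\<close>
definition rhombus_matrix :: "pt \<Rightarrow> real^2^2" where
  "rhombus_matrix c = vector [vector [c$1/2 - sqrt 3/2 * c$2, c$1/2 + sqrt 3/2 * c$2],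
                              vector [sqrt 3/2 * c$1 + c$2/2, - sqrt 3/2 * c$1 + c$2/2]]"

lemma det_rhombus_matrix: "det (rhombus_matrix c) = - sqrt 3 / 2 * (norm c)^2"
  by (simp add: det_2 rhombus_matrix_def norm_pt field_simps) (simp add: algebra_simps power2_eq_square)

lemma rhombus_coordinates:
  assumes c: "norm c = R" and R: "R > 0"
    and le1: "\<bar>cross2 c z\<bar> \<le> sqrt 3 * (z \<bullet> c)" and le2: "\<bar>cross2 c z\<bar> \<le> sqrt 3 * (R^2 - z \<bullet> c)"
  shows "z \<in> (\<lambda>x. rhombus_matrix c *v x) ` cbox 0 1"
proof -
  define x where "x = z \<bullet> c"
  define y where "y = cross2 c z"
  define al where "al = x / R^2 + y / (sqrt 3 * R^2)"
  define be where "be = x / R^2 - y / (sqrt 3 * R^2)"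
  have R2: "R^2 > 0" using R by simp
  have cc: "c$1^2 + c$2^2 = R^2"
    using c by (metis norm_pt real_sqrt_pow2 add_nonneg_nonneg zero_le_power2)
  have "vec2 al be \<in> cbox 0 1"
    using le1 le2 R2 by (auto simp: mem_box_cart forall_2 al_def be_def x_def y_def field_simps)
  moreover have "z = rhombus_matrix c *v vec2 al be"
  proof -
    have sum: "al + be = 2 * x / R^2" and diff: "sqrt 3 * (al - be) = 2 * y / R^2"
      using R2 by (simp_all add: al_def be_def field_simps)
    have "(rhombus_matrix c *v vec2 al be)$1 = c$1 * (al + be) / 2 - c$2 * (sqrt 3 * (al - be)) / 2"
      and "(rhombus_matrix c *v vec2 al be)$2 = c$2 * (al + be) / 2 + c$1 * (sqrt 3 * (al - be)) / 2"
      by (simp_all add: rhombus_matrix_def matrix_vector_mult_def sum_2 field_simps)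
    moreover have "z$1 * R^2 = x * c$1 - y * c$2" "z$2 * R^2 = x * c$2 + y * c$1"
      by (simp_all add: x_def y_def cross2_def inner_pt flip: cc) (simp_all add: algebra_simps power2_eq_square)
    then have "z$1 = x * c$1 / R^2 - y * c$2 / R^2" "z$2 = x * c$2 / R^2 + y * c$1 / R^2"
      using R2 by (simp_all add: field_simps)
    ultimately show ?thesis
      unfolding sum diff by (simp add: pt_eq_iff mult.commute)
  qed
  ultimately show ?thesis by blast
qed

lemma measure_unit_square: "measure lebesgue (cbox (0::pt) 1) = 1"
proof -
  have "(0::pt) \<in> cbox 0 1" by (simp add: mem_box_cart)
  then have "cbox (0::pt) 1 \<noteq> {}" by blast
  then show ?thesis by (simp add: content_cbox_cart UNIV_2)
qed

lemma sectors_inter_subset_rhombus: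
  fixes c :: pt
  assumes c: "norm c = R" and R: "R > 0"
  shows "sector R (inverse R *\<^sub>R c) \<inter> (+) c ` sector R (inverse R *\<^sub>R (- c))
          \<subseteq> (\<lambda>x. rhombus_matrix c *v x) ` cbox 0 1"
proof
  fix z assume z: "z \<in> sector R (inverse R *\<^sub>R c) \<inter> (+) c ` sector R (inverse R *\<^sub>R (- c))"
  then obtain w where w: "z = c + w" "w \<in> sector R (inverse R *\<^sub>R (- c))" by auto
  have "\<bar>cross2 (- c) w\<bar> \<le> sqrt 3 * (w \<bullet> - c)"
    using abs_cross2_le_of_sector[OF _ R w(2)] c by simp
  moreover have "c \<bullet> c = R^2" using c by (metis power2_norm_eq_inner)
  then have "cross2 (- c) w = - cross2 c z" "w \<bullet> - c = R^2 - z \<bullet> c"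
    using w(1) by (simp_all add: cross2_def inner_diff_left algebra_simps)
  ultimately have "\<bar>cross2 c z\<bar> \<le> sqrt 3 * (R^2 - z \<bullet> c)" by (metis abs_minus_cancel)
  then show "z \<in> (\<lambda>x. rhombus_matrix c *v x) ` cbox 0 1"
    using rhombus_coordinates[OF c R] abs_cross2_le_of_sector[OF c R] z by blast
qed

lemma measure_lens_ge:
  fixes c :: pt
  assumes c: "norm c = R" and R: "R > 0"
  shows "measure lebesgue (cball 0 R \<inter> cball c R) \<ge> 2 * pi * R^2 / 3 - sqrt 3 / 2 * R^2"
proof -
  define S1 where "S1 = sector R (inverse R *\<^sub>R c)"
  define S2 where "S2 = (+) c ` sector R (inverse R *\<^sub>R (- c))"
  have unit: "norm (inverse R *\<^sub>R c) = 1" "norm (inverse R *\<^sub>R (- c)) = 1" using c R by simp_all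
  have S: "S1 \<in> lmeasurable" "S2 \<in> lmeasurable"
    by (simp_all add: S1_def S2_def sector_lmeasurable measurable_translation)
  have "S2 \<subseteq> (+) c ` (cball 0 R \<inter> cball (- c) R)"
    unfolding S2_def using sector_subset_lens[of "- c" R] c R by (intro image_mono) simp
  also have "\<dots> = cball 0 R \<inter> cball c R"
    by (simp add: translation_Int Int_commute)
  finally have "S1 \<union> S2 \<subseteq> cball 0 R \<inter> cball c R"
    using sector_subset_lens[OF c R] by (simp add: S1_def)
  then have "measure lebesgue (S1 \<union> S2) \<le> measure lebesgue (cball 0 R \<inter> cball c R)"
    using S by (intro measure_mono_fmeasurable) (auto intro: fmeasurableD)
  moreover have "measure lebesgue (S1 \<union> S2) = measure lebesgue S1 + measure lebesgue S2 - measure lebesgue (S1 \<inter> S2)"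
    using S by (rule measure_Un3)
  moreover have "measure lebesgue S1 \<ge> pi * R^2 / 3" "measure lebesgue S2 \<ge> pi * R^2 / 3"
    using measure_sector_ge[OF unit(1)] measure_sector_ge[OF unit(2)] R
    by (simp_all add: S1_def S2_def measure_translation)
  moreover have "measure lebesgue (S1 \<inter> S2) \<le> measure lebesgue ((\<lambda>x. rhombus_matrix c *v x) ` cbox 0 1)"
    using sectors_inter_subset_rhombus[OF c R] S
    by (intro measure_mono_fmeasurable)
       (auto simp: S1_def S2_def intro: fmeasurableD measurable_linear_image matrix_vector_mul_linear)
  moreover have "measure lebesgue ((\<lambda>x. rhombus_matrix c *v x) ` cbox (0::pt) 1) = sqrt 3 / 2 * R^2"
    by (subst measure_linear_image)
       (auto intro: matrix_vector_mul_linear simp: det_rhombus_matrix c measure_unit_square)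
  ultimately show ?thesis by linarith
qed

definition two_disk_area_coeff :: real where
  "two_disk_area_coeff = 4 * pi / 3 + sqrt 3 / 2"

lemma measure_two_disks_le:
  fixes g :: pt
  assumes g: "norm g \<le> R" and R: "R > 0"
  shows "measure lebesgue (cball 0 R \<union> cball g R) \<le> two_disk_area_coeff * R^2"
proof (cases "g = 0")
  case True
  have "pi \<le> two_disk_area_coeff"
    unfolding two_disk_area_coeff_def using pi_gt_zero real_sqrt_ge_zero[of 3] by linarith
  then show ?thesis
    using True measure_cball_pt[of R 0] R by (simp add: mult_right_mono)
next
  case False
  define c where "c = (R / norm g) *\<^sub>R g"
  have c: "norm c = R" using R False by (simp add: c_def)
  have "cball 0 R \<inter> cball c R \<subseteq> cball 0 R \<inter> cball g R"
  proof
    fix z assume z: "z \<in> cball 0 R \<inter> cball c R"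
    define t where "t = norm g / R"
    have t: "0 \<le> t" "t \<le> 1" and "g = t *\<^sub>R c" using g R False by (auto simp: t_def c_def)
    then have "z - g = (1 - t) *\<^sub>R z + t *\<^sub>R (z - c)" by (simp add: algebra_simps)
    then have "norm (z - g) \<le> (1 - t) * norm z + t * norm (z - c)"
      using t by (metis norm_triangle_ineq norm_scaleR abs_of_nonneg diff_ge_0_iff_ge)
    also have "\<dots> \<le> (1 - t) * R + t * R"
      using z t by (intro add_mono mult_left_mono) (auto simp: dist_norm norm_minus_commute)
    finally show "z \<in> cball 0 R \<inter> cball g R" using z by (simp add: dist_norm norm_minus_commute algebra_simps)
  qed
  then have "measure lebesgue (cball 0 R \<inter> cball c R) \<le> measure lebesgue (cball 0 R \<inter> cball g R)"
    by (intro measure_mono_fmeasurable) (auto intro: fmeasurableD fmeasurable.Int)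
  moreover have "measure lebesgue (cball 0 R \<union> cball g R)
      = measure lebesgue (cball (0::pt) R) + measure lebesgue (cball g R) - measure lebesgue (cball 0 R \<inter> cball g R)"
    by (rule measure_Un3) auto
  ultimately show ?thesis
    using measure_lens_ge[OF c R] measure_cball_pt[of R 0] measure_cball_pt[of R g] R
    by (simp add: two_disk_area_coeff_def algebra_simps)
qed

section \<open>Poisson counts\<close>

lemma ennreal_inverse_le_divide_of_add_le:
  fixes a b :: ennreal and c :: real
  assumes sum: "a + b \<le> ennreal c * a" and a: "0 < a" "a \<le> b" and b: "b < top"
  shows "ennreal (1 / (c - 1)) \<le> a / b"
proof -
  obtain x where x: "a = ennreal x" "0 \<le> x" using a b by (cases a rule: ennreal_cases) auto
  obtain y where y: "b = ennreal y" "0 \<le> y" using b by (cases b rule: ennreal_cases) auto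
  have xy: "0 < x" "x \<le> y" using a x y by (auto simp: ennreal_le_iff)
  have c: "c \<ge> 0"
  proof (rule ccontr)
    assume "\<not> c \<ge> 0"
    then have "a + b \<le> 0" using sum by (simp add: ennreal_neg)
    then show False using a by simp
  qed
  have "ennreal (x + y) \<le> ennreal (c * x)"
    using sum x y c by (simp add: ennreal_mult'[symmetric] ennreal_plus[symmetric] del: ennreal_plus)
  then have "x + y \<le> c * x" using c xy by (subst (asm) ennreal_le_iff) simp_all
  then have le: "y \<le> (c - 1) * x" by (simp add: left_diff_distrib)
  then have "x \<le> c * x - x" using xy unfolding left_diff_distrib by linarith
  then have "1 * x < c * x" using xy by linarith
  then have "c - 1 > 0" using mult_right_less_imp_less xy by fastforce
  then have "x / ((c - 1) * x) \<le> x / y"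
    using le xy by (intro divide_left_mono) simp_all
  then have "1 / (c - 1) \<le> x / y" using xy by simp
  then show ?thesis using x y xy by (simp add: divide_ennreal ennreal_leI)
qed

lemma nn_integral_superadditive:
  "integral\<^sup>N M f + integral\<^sup>N M g \<le> (\<integral>\<^sup>+x. f x + g x \<partial>M)"
proof -
  let ?A = "{a. simple_function M a \<and> a \<le> f}" and ?B = "{b. simple_function M b \<and> b \<le> g}"
  have ne: "?A \<noteq> {}" "?B \<noteq> {}" by (auto intro!: exI[of _ "\<lambda>_. 0"] simp: le_fun_def)
  have "integral\<^sup>N M f + integral\<^sup>N M g = (SUP b\<in>?B. SUP a\<in>?A. integral\<^sup>S M a + integral\<^sup>S M b)"
    unfolding nn_integral_def
    by (simp add: ennreal_SUP_add_left[OF ne(1), symmetric] ennreal_SUP_add_right[OF ne(2)])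
  also have "\<dots> \<le> (\<integral>\<^sup>+x. f x + g x \<partial>M)"
  proof (intro SUP_least)
    fix a b assume a: "a \<in> ?A" and b: "b \<in> ?B"
    then have "integral\<^sup>S M a + integral\<^sup>S M b = integral\<^sup>S M (\<lambda>x. a x + b x)" by simp
    also have "\<dots> \<le> (\<integral>\<^sup>+x. f x + g x \<partial>M)"
      unfolding nn_integral_def
      by (rule SUP_upper) (use a b in \<open>auto simp: le_fun_def intro: add_mono\<close>)
    finally show "integral\<^sup>S M a + integral\<^sup>S M b \<le> (\<integral>\<^sup>+x. f x + g x \<partial>M)" .
  qed
  finally show ?thesis .
qed

lemma poisson_mean_sums: "(\<lambda>k. real k * (m ^ k / fact k * exp (- m))) sums m"
proof -
  have "real (Suc n) * (m ^ Suc n / fact (Suc n)) = m * (m ^ n / fact n)" for n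
    by (simp add: field_simps del: of_nat_Suc)
  then have "(\<lambda>n. real (Suc n) * (m ^ Suc n / fact (Suc n))) sums (m * exp m)"
    using sums_mult[OF exp_converges[of m], of m] by (simp add: divide_inverse mult_ac)
  then have "(\<lambda>k. real k * (m ^ k / fact k)) sums (m * exp m)"
    using sums_Suc[where f="\<lambda>k. real k * (m ^ k / fact k)"] by simp
  from sums_mult2[OF this, of "exp (- m)"] show ?thesis
    by (simp add: mult.assoc exp_minus field_simps)
qed

context
  fixes M :: "'o measure" and X :: "'o \<Rightarrow> pt set" and l :: real and B :: "pt set"
  assumes M: "prob_space M" and X: "poisson_counts M X l" and l: "l \<ge> 0"
    and B: "B \<in> sets lborel" "bounded B"
begin

lemma measurable_poisson_count: "(\<lambda>\<omega>. h (cnt (X \<omega>) B) :: ennreal) \<in> borel_measurable M"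
proof -
  have "(\<lambda>\<omega>. cnt (X \<omega>) B) \<in> measurable M (count_space UNIV)"
    using X B by (auto simp: poisson_counts_def)
  then show ?thesis by (rule measurable_compose[OF _ borel_measurable_count_space])
qed

lemma sets_poisson_count_eq: "{\<omega>\<in>space M. cnt (X \<omega>) B = k} \<in> sets M"
proof -
  have "(\<lambda>\<omega>. cnt (X \<omega>) B) \<in> measurable M (count_space UNIV)"
    using X B by (auto simp: poisson_counts_def)
  from measurable_sets[OF this, of "{k}"] show ?thesis by (simp add: vimage_def Int_def conj_commute)
qed

lemma emeasure_poisson_count_eq:
  "emeasure M {\<omega>\<in>space M. cnt (X \<omega>) B = k}
     = ennreal ((l * measure lborel B) ^ k / fact k * exp (- (l * measure lborel B)))"
  using finite_measure.emeasure_eq_measure[OF prob_space.finite_measure[OF M]] X B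
  by (simp add: poisson_counts_def)

lemma nn_integral_poisson_count:
  "(\<integral>\<^sup>+\<omega>. of_nat (cnt (X \<omega>) B) \<partial>M) = ennreal (l * measure lborel B)"
proof -
  define m where "m = l * measure lborel B"
  let ?E = "\<lambda>k. {\<omega>\<in>space M. cnt (X \<omega>) B = k}"
  have "(\<integral>\<^sup>+\<omega>. of_nat (cnt (X \<omega>) B) \<partial>M) = (\<integral>\<^sup>+\<omega>. (\<Sum>k. of_nat k * indicator (?E k) \<omega>) \<partial>M)"
  proof (rule nn_integral_cong)
    fix \<omega> assume "\<omega> \<in> space M"
    then have "(\<Sum>k. (of_nat k :: ennreal) * indicator (?E k) \<omega>)
        = (\<Sum>k. if k = cnt (X \<omega>) B then of_nat (cnt (X \<omega>) B) else 0)"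
      by (intro suminf_cong) (auto simp: indicator_def)
    also have "\<dots> = of_nat (cnt (X \<omega>) B)" by (rule sums_unique[OF sums_single, symmetric])
    finally show "(of_nat (cnt (X \<omega>) B) :: ennreal) = (\<Sum>k. of_nat k * indicator (?E k) \<omega>)" ..
  qed
  also have "\<dots> = (\<Sum>k. \<integral>\<^sup>+\<omega>. of_nat k * indicator (?E k) \<omega> \<partial>M)"
    by (rule nn_integral_suminf) (auto intro!: borel_measurable_times_ennreal borel_measurable_indicator sets_poisson_count_eq)
  also have "\<dots> = (\<Sum>k. ennreal (real k * (m ^ k / fact k * exp (- m))))"
    by (simp add: nn_integral_cmult_indicator sets_poisson_count_eq emeasure_poisson_count_eq m_def
        ennreal_of_nat_eq_real_of_nat ennreal_mult'[symmetric])
  also have "\<dots> = ennreal m"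
    using poisson_mean_sums[of m] l by (subst suminf_ennreal2) (auto simp: sums_iff m_def)
  finally show ?thesis by (simp add: m_def)
qed

lemma nn_integral_poisson_void:
  "(\<integral>\<^sup>+\<omega>. of_bool (cnt (X \<omega>) B = 0) \<partial>M) = ennreal (exp (- (l * measure lborel B)))"
proof -
  have "(\<integral>\<^sup>+\<omega>. of_bool (cnt (X \<omega>) B = 0) \<partial>M)
      = (\<integral>\<^sup>+\<omega>. indicator {\<omega>\<in>space M. cnt (X \<omega>) B = 0} \<omega> \<partial>M)"
    by (rule nn_integral_cong) (simp add: indicator_def)
  then show ?thesis
    using sets_poisson_count_eq emeasure_poisson_count_eq[of 0] by simp
qed

lemma nn_integral_poisson_occupied:
  "(\<integral>\<^sup>+\<omega>. of_bool (0 < cnt (X \<omega>) B) \<partial>M) = ennreal (1 - exp (- (l * measure lborel B)))"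
proof -
  let ?S = "{\<omega>\<in>space M. cnt (X \<omega>) B = 0}"
  have "(\<integral>\<^sup>+\<omega>. of_bool (0 < cnt (X \<omega>) B) \<partial>M) = (\<integral>\<^sup>+\<omega>. indicator (space M - ?S) \<omega> \<partial>M)"
    by (rule nn_integral_cong) (auto simp: indicator_def)
  also have "\<dots> = emeasure M (space M) - emeasure M ?S"
    using sets_poisson_count_eq by (simp add: emeasure_compl emeasure_poisson_count_eq)
  also have "\<dots> = ennreal 1 - ennreal (exp (- (l * measure lborel B)))"
    using emeasure_poisson_count_eq[of 0] prob_space.emeasure_space_1[OF M] by simp
  also have "\<dots> = ennreal (1 - exp (- (l * measure lborel B)))"
    by (rule ennreal_minus) simp
  finally show ?thesis .
qed
end

lemma indep_counts_nn_integral_mult: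
  fixes M :: "'o measure" and Phi Psi :: "'o \<Rightarrow> pt set" and F G :: "nat \<Rightarrow> ennreal"
  assumes M: "prob_space M" and indep: "indep_counts M Phi Psi"
    and Q: "Q \<in> sets lborel" "bounded Q" and U: "U \<in> sets lborel" "bounded U"
  shows "(\<integral>\<^sup>+\<omega>. F (cnt (Phi \<omega>) Q) * G (cnt (Psi \<omega>) U) \<partial>M)
       = (\<integral>\<^sup>+\<omega>. F (cnt (Phi \<omega>) Q) \<partial>M) * (\<integral>\<^sup>+\<omega>. G (cnt (Psi \<omega>) U) \<partial>M)"
proof -
  let ?I = "{..<1::nat} <+> {..<1::nat}"
  define Xs :: "nat + nat \<Rightarrow> 'o \<Rightarrow> nat"
    where "Xs = (\<lambda>i. case i of Inl j \<Rightarrow> (\<lambda>\<omega>. cnt (Phi \<omega>) Q) | Inr j \<Rightarrow> (\<lambda>\<omega>. cnt (Psi \<omega>) U))"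
  define Y :: "nat + nat \<Rightarrow> nat \<Rightarrow> ennreal"
    where "Y = (\<lambda>i. case i of Inl j \<Rightarrow> F | Inr j \<Rightarrow> G)"
  have "prob_space.indep_vars M (\<lambda>_. count_space UNIV) Xs ?I"
    using indep Q U unfolding indep_counts_def Xs_def
    by (elim allE[of _ "\<lambda>_. Q"] allE[of _ "\<lambda>_. U"] allE[of _ 1]) (auto simp: disjoint_family_on_def)
  then have "prob_space.indep_vars M (\<lambda>_. borel) (\<lambda>i \<omega>. Y i (Xs i \<omega>)) ?I"
    by (rule prob_space.indep_vars_compose2[OF M]) auto
  then have "(\<integral>\<^sup>+\<omega>. (\<Prod>i\<in>?I. Y i (Xs i \<omega>)) \<partial>M) = (\<Prod>i\<in>?I. \<integral>\<^sup>+\<omega>. Y i (Xs i \<omega>) \<partial>M)"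
    by (rule prob_space.indep_vars_nn_integral[OF M, rotated]) auto
  moreover have "?I = {Inl 0, Inr 0}" by (auto simp: lessThan_def)
  ultimately show ?thesis by (simp add: Y_def Xs_def)
qed

section \<open>A grid of square cells\<close>

definition grid_cell :: "real \<Rightarrow> int \<times> int \<Rightarrow> pt set" where
  "grid_cell d ij = {y. of_int (fst ij) * d \<le> y$1 \<and> y$1 < of_int (fst ij + 1) * d \<and>
                        of_int (snd ij) * d \<le> y$2 \<and> y$2 < of_int (snd ij + 1) * d}"

definition grid_corner :: "real \<Rightarrow> int \<times> int \<Rightarrow> pt" where
  "grid_corner d ij = vec2 (of_int (fst ij) * d) (of_int (snd ij) * d)"

definition grid_index :: "real \<Rightarrow> pt \<Rightarrow> int \<times> int" where
  "grid_index d y = (\<lfloor>y$1 / d\<rfloor>, \<lfloor>y$2 / d\<rfloor>)"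

lemma mem_grid_cell_iff: "d > 0 \<Longrightarrow> y \<in> grid_cell d ij \<longleftrightarrow> grid_index d y = ij"
  by (cases ij) (simp add: grid_cell_def grid_index_def floor_eq_iff field_simps)

lemma grid_corner_in_cell: "d > 0 \<Longrightarrow> grid_corner d ij \<in> grid_cell d ij"
  by (simp add: grid_cell_def grid_corner_def algebra_simps)

lemma grid_corner_scale: "grid_corner (s * d) ij = s *\<^sub>R grid_corner d ij"
  by (simp add: grid_corner_def pt_eq_iff)

lemma norm_diff_grid_corner_le:
  assumes "y \<in> grid_cell d ij" shows "norm (y - grid_corner d ij) \<le> 2 * d"
proof -
  have c: "\<bar>(y - grid_corner d ij) $ i\<bar> \<le> d" for i
    using assms exhaust_2[of i] by (auto simp: grid_cell_def grid_corner_def algebra_simps)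
  have "norm (y - grid_corner d ij) \<le> \<bar>(y - grid_corner d ij) $ 1\<bar> + \<bar>(y - grid_corner d ij) $ 2\<bar>"
    using norm_le_l1_cart[of "y - grid_corner d ij"] by (simp add: sum_2)
  then show ?thesis using c[of 1] c[of 2] by linarith
qed

lemma grid_cell_borel: "grid_cell d ij \<in> sets lborel"
  unfolding grid_cell_def by measurable

lemma bounded_grid_cell: "bounded (grid_cell d ij)"
  by (rule bounded_subset[OF bounded_cball[of "grid_corner d ij" "2 * d"]])
     (auto simp: dist_norm norm_minus_commute dest: norm_diff_grid_corner_le)

lemma measure_grid_cell:
  assumes d: "d > 0" shows "measure lborel (grid_cell d ij) = d^2"
proof -
  define a where "a = grid_corner d ij"
  define b where "b = grid_corner d (fst ij + 1, snd ij + 1)"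
  have sub: "box a b \<subseteq> grid_cell d ij" "grid_cell d ij \<subseteq> cbox a b"
    by (auto simp: mem_box_cart forall_2 grid_cell_def a_def b_def grid_corner_def)
  have "a \<in> cbox a b" using d by (simp add: mem_box_cart forall_2 a_def b_def grid_corner_def)
  then have "cbox a b \<noteq> {}" by blast
  then have "measure lborel (cbox a b) = d^2"
    using d by (auto simp: content_cbox_cart UNIV_2 a_def b_def grid_corner_def algebra_simps power2_eq_square)
  moreover have "emeasure lborel (box a b) = emeasure lborel (cbox a b)"
    by (simp add: emeasure_lborel_box_eq emeasure_lborel_cbox_eq)
  ultimately have "emeasure lborel (box a b) = ennreal (d^2)" "emeasure lborel (cbox a b) = ennreal (d^2)"
    by (simp_all add: emeasure_eq_measure2)
  then have "emeasure lborel (grid_cell d ij) = ennreal (d^2)"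
    using emeasure_mono[OF sub(1) grid_cell_borel] emeasure_mono[OF sub(2), of lborel] by simp
  then show ?thesis by (simp add: measure_def)
qed

definition cells_meeting_disk :: "real \<Rightarrow> real \<Rightarrow> (int \<times> int) set" where
  "cells_meeting_disk d r = {ij. grid_cell d ij \<inter> cball 0 r \<noteq> {}}"

text \<open>The cell of the origin is excluded, so that points found in these cells differ from \<open>0\<close>.\<close>
definition cells_inside_disk :: "real \<Rightarrow> real \<Rightarrow> (int \<times> int) set" where
  "cells_inside_disk d r = {ij. grid_cell d ij \<subseteq> cball 0 r \<and> ij \<noteq> (0, 0)}"

lemma finite_cells_meeting_disk:
  assumes d: "d > 0" shows "finite (cells_meeting_disk d r)"
proof -
  let ?K = "\<lceil>r / d\<rceil>"
  have "cells_meeting_disk d r \<subseteq> {-?K..?K} \<times> {-?K..?K}"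
  proof
    fix ij assume "ij \<in> cells_meeting_disk d r"
    then obtain y where "y \<in> grid_cell d ij" "norm y \<le> r"
      by (auto simp: cells_meeting_disk_def)
    then have y: "grid_index d y = ij" "norm y \<le> r" by (simp_all add: mem_grid_cell_iff[OF d])
    have "\<bar>y $ i / d\<bar> \<le> r / d" for i
      using component_le_norm_cart[of y i] y(2) d by (simp add: divide_right_mono)
    then have "- ?K \<le> \<lfloor>y $ i / d\<rfloor> \<and> \<lfloor>y $ i / d\<rfloor> \<le> ?K" for i
      by (metis abs_le_iff ceiling_minus ceiling_mono floor_le_ceiling floor_mono le_floor_iff
          minus_le_iff order_trans)
    then show "ij \<in> {-?K..?K} \<times> {-?K..?K}" using y(1) by (auto simp: grid_index_def)
  qed
  then show ?thesis by (rule finite_subset) simp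
qed

lemma cells_inside_subset_meeting_disk: "d > 0 \<Longrightarrow> cells_inside_disk d r \<subseteq> cells_meeting_disk d r"
  using grid_corner_in_cell by (fastforce simp: cells_inside_disk_def cells_meeting_disk_def)

lemma finite_cells_inside_disk: "d > 0 \<Longrightarrow> finite (cells_inside_disk d r)"
  by (metis cells_inside_subset_meeting_disk finite_cells_meeting_disk finite_subset)

section \<open>The degrees of the origin\<close>

definition locally_finite_pts :: "pt set \<Rightarrow> bool" where
  "locally_finite_pts X \<longleftrightarrow> (\<forall>B. bounded B \<longrightarrow> finite (X \<inter> B))"

lemma cnt_eq_0_iff: "locally_finite_pts X \<Longrightarrow> bounded B \<Longrightarrow> cnt X B = 0 \<longleftrightarrow> X \<inter> B = {}"
  by (auto simp: locally_finite_pts_def cnt_def)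

lemma cnt_pos_iff: "locally_finite_pts X \<Longrightarrow> bounded B \<Longrightarrow> 0 < cnt X B \<longleftrightarrow> X \<inter> B \<noteq> {}"
  using cnt_eq_0_iff by fastforce

lemma finite_neighbours:
  "locally_finite_pts X \<Longrightarrow> finite {y \<in> insert 0 X. dir_edge r Psi 0 y \<or> dir_edge r Psi y 0}"
  unfolding locally_finite_pts_def
  by (rule finite_subset[of _ "X \<inter> cball 0 r"]) (auto simp: dir_edge_def dist_norm norm_minus_commute)

lemma deg_basic_le_deg_enh:
  "locally_finite_pts X \<Longrightarrow> deg_basic r (insert 0 X) Psi \<le> deg_enh r (insert 0 X) Psi"
  unfolding deg_basic_def deg_enh_def by (rule card_mono[OF finite_neighbours]) auto

lemma deg_basic_add_deg_enh:
  assumes "locally_finite_pts X"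
  shows "deg_basic r (insert 0 X) Psi + deg_enh r (insert 0 X) Psi =
         card {y \<in> insert 0 X. dir_edge r Psi 0 y} + card {y \<in> insert 0 X. dir_edge r Psi y 0}"
proof -
  let ?A = "{y \<in> insert 0 X. dir_edge r Psi 0 y}" and ?B = "{y \<in> insert 0 X. dir_edge r Psi y 0}"
  have "finite ?A" "finite ?B" by (auto intro: finite_subset[OF _ finite_neighbours[OF assms]])
  moreover have "?A \<inter> ?B = {y \<in> insert 0 X. dir_edge r Psi 0 y \<and> dir_edge r Psi y 0}"
    and "?A \<union> ?B = {y \<in> insert 0 X. dir_edge r Psi 0 y \<or> dir_edge r Psi y 0}" by auto
  ultimately show ?thesis using card_Un_Int[of ?A ?B] by (simp add: deg_basic_def deg_enh_def)
qed

text \<open>If the obstacles avoid the disks of radius \<open>cell_outer_radius d ij\<close> around \<open>0\<close> and around the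
  corner of the cell, every point of the cell within range is joined to \<open>0\<close> in both directions.\<close>
definition cell_outer_radius :: "real \<Rightarrow> int \<times> int \<Rightarrow> real" where
  "cell_outer_radius d ij = norm (grid_corner d ij) + 4 * d"

definition cell_outer_zone :: "real \<Rightarrow> int \<times> int \<Rightarrow> pt set" where
  "cell_outer_zone d ij =
     cball 0 (cell_outer_radius d ij) \<union> cball (grid_corner d ij) (cell_outer_radius d ij)"

text \<open>Conversely, an edge from (to) a point of the cell forces the obstacles to avoid the ball of
  radius \<open>cell_inner_radius\<close> around \<open>0\<close> (the corner).\<close>
definition cell_inner_radius :: "real \<Rightarrow> int \<times> int \<Rightarrow> real" where
  "cell_inner_radius d ij = norm (grid_corner d ij) - 4 * d"

lemma edge_disks_subset_cell_outer_zone: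
  assumes y: "y \<in> grid_cell d ij"
  shows "cball 0 (norm y) \<subseteq> cell_outer_zone d ij" "cball y (norm y) \<subseteq> cell_outer_zone d ij"
proof -
  let ?c = "grid_corner d ij"
  have yc: "norm (y - ?c) \<le> 2 * d" by (rule norm_diff_grid_corner_le[OF y])
  have y_le: "norm y \<le> norm ?c + 2 * d" using yc norm_triangle_sub[of y ?c] by linarith
  show "cball 0 (norm y) \<subseteq> cell_outer_zone d ij"
    using y_le yc norm_ge_zero[of "y - ?c"]
    by (auto simp del: norm_ge_zero simp: cell_outer_zone_def cell_outer_radius_def)
  show "cball y (norm y) \<subseteq> cell_outer_zone d ij"
  proof
    fix z assume "z \<in> cball y (norm y)"
    moreover have "norm (z - ?c) \<le> norm (z - y) + norm (y - ?c)"
      using norm_triangle_ineq[of "z - y" "y - ?c"] by simp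
    ultimately show "z \<in> cell_outer_zone d ij"
      using y_le yc by (simp add: cell_outer_zone_def cell_outer_radius_def dist_norm norm_minus_commute)
  qed
qed

lemma inner_balls_subset_edge_disks:
  assumes y: "y \<in> grid_cell d ij"
  shows "ball 0 (cell_inner_radius d ij) \<subseteq> cball 0 (norm y)"
    and "ball (grid_corner d ij) (cell_inner_radius d ij) \<subseteq> cball y (norm y)"
proof -
  let ?c = "grid_corner d ij"
  have yc: "norm (y - ?c) \<le> 2 * d" by (rule norm_diff_grid_corner_le[OF y])
  have c_le: "norm ?c \<le> norm y + 2 * d"
    using yc norm_triangle_sub[of ?c y] by (simp add: norm_minus_commute)
  show "ball 0 (cell_inner_radius d ij) \<subseteq> cball 0 (norm y)"
    using c_le yc norm_ge_zero[of "y - ?c"]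
    by (auto simp del: norm_ge_zero simp: cell_inner_radius_def dist_0_norm)
  show "ball ?c (cell_inner_radius d ij) \<subseteq> cball y (norm y)"
  proof
    fix z assume "z \<in> ball ?c (cell_inner_radius d ij)"
    moreover have "norm (z - y) \<le> norm (z - ?c) + norm (y - ?c)"
      using norm_triangle_ineq[of "z - ?c" "?c - y"] by (simp add: norm_minus_commute)
    ultimately show "z \<in> cball y (norm y)"
      using c_le yc by (simp add: cell_inner_radius_def dist_norm norm_minus_commute)
  qed
qed

lemma card_occupied_cells_le_deg_basic:
  assumes d: "d > 0" and X: "locally_finite_pts X"
  shows "card {ij \<in> cells_inside_disk d r. X \<inter> grid_cell d ij \<noteq> {} \<and> Psi \<inter> cell_outer_zone d ij = {}}
           \<le> deg_basic r (insert 0 X) Psi"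
proof -
  let ?T = "{ij \<in> cells_inside_disk d r. X \<inter> grid_cell d ij \<noteq> {} \<and> Psi \<inter> cell_outer_zone d ij = {}}"
  let ?S = "{y \<in> insert 0 X. dir_edge r Psi 0 y \<and> dir_edge r Psi y 0}"
  have "?T \<subseteq> grid_index d ` ?S"
  proof
    fix ij assume ij: "ij \<in> ?T"
    then obtain y where y: "y \<in> X" "y \<in> grid_cell d ij" by auto
    have "y \<noteq> 0"
      using ij y(2) mem_grid_cell_iff[OF d] by (auto simp: cells_inside_disk_def grid_index_def)
    moreover have "norm y \<le> r" using ij y(2) by (auto simp: cells_inside_disk_def)
    moreover have "cball 0 (norm y) \<inter> Psi = {}" "cball y (norm y) \<inter> Psi = {}"
      using ij edge_disks_subset_cell_outer_zone[OF y(2)] by auto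
    ultimately have "y \<in> ?S" using y(1) by (simp add: dir_edge_def dist_norm norm_minus_commute)
    moreover have "grid_index d y = ij" using y(2) mem_grid_cell_iff[OF d] by blast
    ultimately show "ij \<in> grid_index d ` ?S" by blast
  qed
  moreover have "finite ?S" by (rule finite_subset[OF _ finite_neighbours[OF X]]) auto
  ultimately have "card ?T \<le> card ?S" by (meson card_image_le card_mono finite_imageI order_trans)
  then show ?thesis by (simp add: deg_basic_def)
qed

lemma card_le_sum_cell_counts:
  assumes d: "d > 0" and X: "locally_finite_pts X" and A: "A \<subseteq> X \<inter> cball 0 r"
    and V: "\<And>ij y. y \<in> A \<Longrightarrow> y \<in> grid_cell d ij \<Longrightarrow> Psi \<inter> V ij = {}"
  shows "card A \<le> (\<Sum>ij\<in>cells_meeting_disk d r. cnt X (grid_cell d ij) * of_bool (Psi \<inter> V ij = {}))"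
proof -
  have finA: "finite A"
    using A X by (metis bounded_cball finite_subset locally_finite_pts_def)
  have "grid_index d ` A \<subseteq> cells_meeting_disk d r"
  proof (rule image_subsetI)
    fix y assume "y \<in> A"
    then have "y \<in> grid_cell d (grid_index d y) \<inter> cball 0 r" using A mem_grid_cell_iff[OF d] by auto
    then show "grid_index d y \<in> cells_meeting_disk d r" unfolding cells_meeting_disk_def by blast
  qed
  then have "card A = (\<Sum>ij\<in>cells_meeting_disk d r. card {y \<in> A. grid_index d y = ij})"
    using sum.group[OF finA finite_cells_meeting_disk[OF d], where g = "grid_index d" and h = "\<lambda>_. 1::nat"]
    by simp
  also have "\<dots> \<le> (\<Sum>ij\<in>cells_meeting_disk d r. cnt X (grid_cell d ij) * of_bool (Psi \<inter> V ij = {}))"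
  proof (rule sum_mono)
    fix ij
    have cell: "{y \<in> A. grid_index d y = ij} = A \<inter> grid_cell d ij"
      using mem_grid_cell_iff[OF d] by blast
    have "card (A \<inter> grid_cell d ij) \<le> cnt X (grid_cell d ij)"
      using A X bounded_grid_cell unfolding cnt_def locally_finite_pts_def
      by (intro card_mono) auto
    moreover have "A \<inter> grid_cell d ij \<noteq> {} \<Longrightarrow> Psi \<inter> V ij = {}" using V by blast
    ultimately show "card {y \<in> A. grid_index d y = ij} \<le> cnt X (grid_cell d ij) * of_bool (Psi \<inter> V ij = {})"
      unfolding cell by (cases "A \<inter> grid_cell d ij = {}") auto
  qed
  finally show ?thesis .
qed

definition count_in_clear_cells ::
    "real \<Rightarrow> real \<Rightarrow> pt set \<Rightarrow> pt set \<Rightarrow> (int \<times> int \<Rightarrow> pt set) \<Rightarrow> ennreal" where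
  "count_in_clear_cells d r X Y V =
     (\<Sum>ij\<in>cells_meeting_disk d r. of_nat (cnt X (grid_cell d ij)) * of_bool (cnt Y (V ij) = 0))"

lemma card_le_count_in_clear_cells:
  assumes d: "d > 0" and X: "locally_finite_pts X" and Y: "locally_finite_pts Y"
    and V: "\<And>ij. bounded (V ij)" and P: "\<And>y. P y \<Longrightarrow> y \<noteq> 0 \<and> norm y \<le> r"
    and clear: "\<And>y ij. y \<in> X \<Longrightarrow> P y \<Longrightarrow> y \<in> grid_cell d ij \<Longrightarrow> Y \<inter> V ij = {}"
  shows "of_nat (card {y \<in> insert 0 X. P y}) \<le> count_in_clear_cells d r X Y V"
proof -
  have "card {y \<in> insert 0 X. P y} \<le> (\<Sum>ij\<in>cells_meeting_disk d r. cnt X (grid_cell d ij) * of_bool (Y \<inter> V ij = {}))"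
  proof (rule card_le_sum_cell_counts[OF d X])
    show "{y \<in> insert 0 X. P y} \<subseteq> X \<inter> cball 0 r" using P by auto
    show "Y \<inter> V ij = {}" if "y \<in> {y \<in> insert 0 X. P y}" "y \<in> grid_cell d ij" for y ij
      using clear that P by blast
  qed
  then have "(of_nat (card {y \<in> insert 0 X. P y}) :: ennreal)
      \<le> of_nat (\<Sum>ij\<in>cells_meeting_disk d r. cnt X (grid_cell d ij) * of_bool (Y \<inter> V ij = {}))"
    by (rule of_nat_mono)
  then show ?thesis
    unfolding count_in_clear_cells_def using cnt_eq_0_iff[OF Y V]
    by (simp add: of_nat_sum del: sum_mult_of_bool_eq)
qed

lemma deg_basic_add_deg_enh_le_count_in_clear_cells:
  assumes d: "d > 0" and X: "locally_finite_pts X" and Y: "locally_finite_pts Y"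
  shows "of_nat (deg_basic r (insert 0 X) Y) + of_nat (deg_enh r (insert 0 X) Y)
    \<le> count_in_clear_cells d r X Y (\<lambda>ij. ball 0 (cell_inner_radius d ij))
      + count_in_clear_cells d r X Y (\<lambda>ij. ball (grid_corner d ij) (cell_inner_radius d ij))"
proof -
  have "of_nat (card {y \<in> insert 0 X. dir_edge r Y 0 y})
      \<le> count_in_clear_cells d r X Y (\<lambda>ij. ball 0 (cell_inner_radius d ij))"
  proof (rule card_le_count_in_clear_cells[OF d X Y])
    show "Y \<inter> ball 0 (cell_inner_radius d ij) = {}" if "dir_edge r Y 0 y" "y \<in> grid_cell d ij" for y ij
      using that inner_balls_subset_edge_disks(1)[of y d ij] by (auto simp: dir_edge_def dist_norm)
  qed (simp_all add: dir_edge_def dist_norm)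
  moreover have "of_nat (card {y \<in> insert 0 X. dir_edge r Y y 0})
      \<le> count_in_clear_cells d r X Y (\<lambda>ij. ball (grid_corner d ij) (cell_inner_radius d ij))"
  proof (rule card_le_count_in_clear_cells[OF d X Y])
    show "Y \<inter> ball (grid_corner d ij) (cell_inner_radius d ij) = {}"
      if "dir_edge r Y y 0" "y \<in> grid_cell d ij" for y ij
      using that inner_balls_subset_edge_disks(2)[of y d ij]
      by (auto simp: dir_edge_def dist_norm norm_minus_commute)
  qed (simp_all add: dir_edge_def dist_norm norm_minus_commute)
  ultimately show ?thesis
    unfolding of_nat_add[symmetric] deg_basic_add_deg_enh[OF X] by (simp add: add_mono)
qed

lemma cell_outer_zone_borel: "cell_outer_zone d ij \<in> sets lborel" "bounded (cell_outer_zone d ij)"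
  by (auto simp: cell_outer_zone_def intro!: borel_closed)

lemma measure_cell_outer_zone_le:
  assumes "d > 0"
  shows "measure lborel (cell_outer_zone d ij) \<le> two_disk_area_coeff * (cell_outer_radius d ij)^2"
proof -
  have "measure lborel (cell_outer_zone d ij) = measure lebesgue (cell_outer_zone d ij)"
    by (simp add: cell_outer_zone_def borel_closed)
  also have "\<dots> \<le> two_disk_area_coeff * (cell_outer_radius d ij)^2"
    unfolding cell_outer_zone_def
    by (rule measure_two_disks_le) (use assms in \<open>auto simp: cell_outer_radius_def intro: add_nonneg_pos\<close>)
  finally show ?thesis .
qed

section \<open>Rescaling\<close>

lemma cell_outer_radius_sq_le:
  assumes d: "d > 0" and c: "norm (grid_corner d ij) \<le> r"
  shows "(cell_outer_radius d ij)^2 \<le> (max 0 (cell_inner_radius d ij))^2 + 16 * d * r + 64 * d^2"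
proof (cases "norm (grid_corner d ij) \<ge> 4 * d")
  case True
  then have "(cell_outer_radius d ij)^2 = (max 0 (cell_inner_radius d ij))^2 + 16 * d * norm (grid_corner d ij)"
    by (simp add: cell_outer_radius_def cell_inner_radius_def power2_eq_square algebra_simps)
  moreover have "16 * d * norm (grid_corner d ij) \<le> 16 * d * r" using c d by simp
  ultimately show ?thesis by (simp add: add_increasing2)
next
  case False
  then have "(cell_outer_radius d ij)^2 \<le> (8 * d)^2"
    using d by (intro power_mono) (auto simp: cell_outer_radius_def)
  moreover have "0 \<le> 16 * d * r" using c d norm_ge_zero[of "grid_corner d ij"] by (simp del: norm_ge_zero)
  moreover have "max 0 (cell_inner_radius d ij) = 0" using False by (simp add: cell_inner_radius_def)
  ultimately show ?thesis by (simp add: power2_eq_square)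
qed

lemma cell_inner_radius_scale:
  assumes "s > 0" shows "max 0 (cell_inner_radius (s * d) ij) = s * max 0 (cell_inner_radius d ij)"
proof -
  have "norm (grid_corner (s * d) ij) = s * norm (grid_corner d ij)"
    using assms by (simp only: grid_corner_scale norm_scaleR abs_of_pos)
  then have "cell_inner_radius (s * d) ij = s * cell_inner_radius d ij"
    by (simp add: cell_inner_radius_def algebra_simps)
  then show ?thesis using assms by (simp add: max_mult_distrib_left)
qed

lemma cells_meeting_disk_scaled_subset:
  assumes d: "d > 0" and s: "s > 1" and dr: "4 * d \<le> r - r / s"
  shows "cells_meeting_disk (s * d) r \<subseteq> insert (0, 0) (cells_inside_disk d r)"
proof
  fix ij assume "ij \<in> cells_meeting_disk (s * d) r"
  then obtain y where y: "y \<in> grid_cell (s * d) ij" "norm y \<le> r" by (auto simp: cells_meeting_disk_def)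
  have "s * norm (grid_corner d ij) = norm (grid_corner (s * d) ij)"
    using s by (simp add: grid_corner_scale)
  also have "\<dots> \<le> norm y + 2 * (s * d)"
    using norm_diff_grid_corner_le[OF y(1)] norm_triangle_sub[of "grid_corner (s * d) ij" y]
    by (simp add: norm_minus_commute)
  finally have "norm (grid_corner d ij) \<le> r / s + 2 * d"
    using y(2) s by (simp add: field_simps)
  have "grid_cell d ij \<subseteq> cball 0 r"
  proof
    fix z assume "z \<in> grid_cell d ij"
    then have "norm z \<le> norm (grid_corner d ij) + 2 * d"
      using norm_diff_grid_corner_le norm_triangle_sub[of z "grid_corner d ij"] by fastforce
    then show "z \<in> cball 0 r" using dr \<open>norm (grid_corner d ij) \<le> r / s + 2 * d\<close> by simp
  qed
  then show "ij \<in> insert (0, 0) (cells_inside_disk d r)" by (simp add: cells_inside_disk_def)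
qed

text \<open>Scaling the plane by \<open>scale_factor\<close> turns the Gaussian weight \<open>exp (- lam * pi * \<bar>x\<bar>^2)\<close> of
  the upper bound into the weight \<open>exp (- lam * two_disk_area_coeff * \<bar>x\<bar>^2)\<close> of the lower bound.\<close>
definition scale_factor :: real where
  "scale_factor = sqrt (two_disk_area_coeff / pi)"

lemma scale_factor_gt_1: "scale_factor > 1"
  and pi_mult_scale_factor_sq: "pi * scale_factor^2 = two_disk_area_coeff"
proof -
  have "pi < two_disk_area_coeff"
    using pi_gt_zero real_sqrt_ge_zero[of 3] unfolding two_disk_area_coeff_def by linarith
  then have gt1: "two_disk_area_coeff / pi > 1" using pi_gt_zero by simp
  then show "scale_factor > 1" by (simp add: scale_factor_def)
  have "scale_factor^2 = two_disk_area_coeff / pi"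
    unfolding scale_factor_def by (intro real_sqrt_pow2) (use gt1 in linarith)
  then show "pi * scale_factor^2 = two_disk_area_coeff" by simp
qed

lemma inverse_two_scale_factor_sq_minus_1:
  "1 / (2 * scale_factor^2 - 1) = 3 * pi / (5 * pi + 3 * sqrt 3)"
proof -
  have "pi * (2 * scale_factor^2 - 1) = (5 * pi + 3 * sqrt 3) / 3"
    using pi_mult_scale_factor_sq by (simp add: two_disk_area_coeff_def algebra_simps)
  then have "2 * scale_factor^2 - 1 = (5 * pi + 3 * sqrt 3) / (3 * pi)"
    using pi_gt_zero by (simp add: field_simps)
  then show ?thesis by simp
qed

lemma sum_scaled_inner_le:
  assumes d: "d > 0" and dr: "4 * d \<le> r - r / scale_factor" and lam: "lam \<ge> 0"
  defines "s \<equiv> scale_factor" and "C \<equiv> two_disk_area_coeff"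
  shows "(\<Sum>ij\<in>cells_meeting_disk (s * d) r. (s * d)^2 * exp (- (lam * (pi * (max 0 (cell_inner_radius (s * d) ij))^2))))
         \<le> s^2 * d^2 * (exp (lam * C * (16 * d * r + 64 * d^2))
                         * (\<Sum>ij\<in>cells_inside_disk d r. exp (- (lam * C * (cell_outer_radius d ij)^2))) + 1)"
proof -
  define T where "T ij = s^2 * d^2 * exp (- (lam * C * (max 0 (cell_inner_radius d ij))^2))" for ij
  have s: "s > 1" "pi * s^2 = C" using scale_factor_gt_1 pi_mult_scale_factor_sq by (simp_all add: s_def C_def)
  have C: "C > 0" using s pi_gt_zero by (metis mult_pos_pos zero_less_power less_trans zero_less_one)
  have "(s * d)^2 * exp (- (lam * (pi * (max 0 (cell_inner_radius (s * d) ij))^2))) = T ij" for ij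
    unfolding cell_inner_radius_scale[of s d ij, OF less_trans[OF zero_less_one s(1)]] T_def s(2)[symmetric]
    by (simp add: power_mult_distrib algebra_simps)
  then have "(\<Sum>ij\<in>cells_meeting_disk (s * d) r. (s * d)^2 * exp (- (lam * (pi * (max 0 (cell_inner_radius (s * d) ij))^2))))
      \<le> (\<Sum>ij\<in>insert (0, 0) (cells_inside_disk d r). T ij)"
    using cells_meeting_disk_scaled_subset[OF d s(1) dr[folded s_def]] finite_cells_inside_disk[OF d]
    by (simp add: sum_mono2 T_def)
  also have "\<dots> = T (0, 0) + (\<Sum>ij\<in>cells_inside_disk d r. T ij)"
    using finite_cells_inside_disk[OF d] by (simp add: cells_inside_disk_def)
  also have "T (0, 0) \<le> s^2 * d^2"
    unfolding T_def using lam C by (intro mult_left_le) (simp_all add: mult_nonneg_nonneg)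
  also have "(\<Sum>ij\<in>cells_inside_disk d r. T ij)
      \<le> (\<Sum>ij\<in>cells_inside_disk d r. s^2 * d^2 * (exp (lam * C * (16 * d * r + 64 * d^2)) * exp (- (lam * C * (cell_outer_radius d ij)^2))))"
  proof (rule sum_mono)
    fix ij assume "ij \<in> cells_inside_disk d r"
    then have "norm (grid_corner d ij) \<le> r"
      using grid_corner_in_cell[OF d, of ij] by (auto simp: cells_inside_disk_def)
    from cell_outer_radius_sq_le[OF d this]
    have "lam * C * (cell_outer_radius d ij)^2
        \<le> lam * C * ((max 0 (cell_inner_radius d ij))^2 + (16 * d * r + 64 * d^2))"
      using lam C by (intro mult_left_mono) (simp_all add: add.assoc)
    then have "lam * C * (cell_outer_radius d ij)^2
        \<le> lam * C * (max 0 (cell_inner_radius d ij))^2 + lam * C * (16 * d * r + 64 * d^2)"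
      by (simp only: distrib_left)
    then show "T ij \<le> s^2 * d^2 * (exp (lam * C * (16 * d * r + 64 * d^2)) * exp (- (lam * C * (cell_outer_radius d ij)^2)))"
      unfolding T_def by (intro mult_left_mono) (simp_all flip: exp_add)
  qed
  also have "\<dots> = s^2 * d^2 * (exp (lam * C * (16 * d * r + 64 * d^2))
                         * (\<Sum>ij\<in>cells_inside_disk d r. exp (- (lam * C * (cell_outer_radius d ij)^2))))"
    by (simp only: sum_distrib_left)
  finally show ?thesis by (simp add: distrib_left add.commute)
qed

definition outer_weight_sum :: "real \<Rightarrow> real \<Rightarrow> real \<Rightarrow> real" where
  "outer_weight_sum lam r d =
     (\<Sum>ij\<in>cells_inside_disk d r. exp (- (lam * two_disk_area_coeff * (cell_outer_radius d ij)^2)))"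

lemma outer_weight_sum_pos:
  assumes d: "d > 0" "4 * d \<le> r" shows "outer_weight_sum lam r d > 0"
proof -
  have "norm (grid_corner d (1, 1)) \<le> 2 * d"
    using norm_le_l1_cart[of "grid_corner d (1, 1)"] d by (simp add: grid_corner_def sum_2)
  have "grid_cell d (1, 1) \<subseteq> cball 0 r"
  proof
    fix y assume "y \<in> grid_cell d (1, 1)"
    then have "norm y \<le> norm (grid_corner d (1, 1)) + 2 * d"
      using norm_diff_grid_corner_le norm_triangle_sub[of y "grid_corner d (1, 1)"] by fastforce
    then show "y \<in> cball 0 r" using d \<open>norm (grid_corner d (1, 1)) \<le> 2 * d\<close> by simp
  qed
  then have "(1, 1) \<in> cells_inside_disk d r" by (simp add: cells_inside_disk_def)
  then show ?thesis
    unfolding outer_weight_sum_def by (intro sum_pos2[OF finite_cells_inside_disk[OF d(1)]]) auto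
qed

lemma le_one_minus_exp_neg_mult: "(x::real) \<ge> 0 \<Longrightarrow> x \<le> (1 - exp (- x)) * (1 + x)"
  using exp_ge_add_one_self[of x] by (simp add: exp_minus field_simps)

text \<open>The bounds at mesh size \<open>d\<close> pass to the limit \<open>d \<rightarrow> 0\<close>, where \<open>K d \<rightarrow> 1\<close> and
  \<open>1 - exp (- d\<^sup>2) \<sim> d\<^sup>2\<close>.\<close>
lemma add_le_of_mesh_bounds:
  fixes n n' s d0 :: real and S K :: "real \<Rightarrow> real"
  assumes d0: "d0 > 0" and S: "\<And>d. S d \<ge> 0" and K: "\<And>d. K d \<ge> 0" "(K \<longlongrightarrow> 1) (at_right 0)"
    and lower: "\<And>d. 0 < d \<Longrightarrow> d \<le> d0 \<Longrightarrow> (1 - exp (- (d^2))) * S d \<le> n"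
    and upper: "\<And>d. 0 < d \<Longrightarrow> d \<le> d0 \<Longrightarrow> n + n' \<le> 2 * (s^2 * d^2 * (K d * S d + 1))"
  shows "n + n' \<le> 2 * s^2 * n"
proof -
  have bound: "n + n' \<le> 2 * s^2 * (K d * n * (1 + d^2) + d^2)" if d: "0 < d" "d \<le> d0" for d
  proof -
    have "d^2 * S d \<le> ((1 - exp (- (d^2))) * (1 + d^2)) * S d"
      by (intro mult_right_mono le_one_minus_exp_neg_mult S) simp
    also have "\<dots> = (1 - exp (- (d^2))) * S d * (1 + d^2)" by (simp only: mult_ac)
    also have "\<dots> \<le> n * (1 + d^2)" using lower[OF d] by (intro mult_right_mono) simp_all
    finally have "d^2 * S d \<le> n * (1 + d^2)" .
    then have "2 * s^2 * (K d * (d^2 * S d) + d^2) \<le> 2 * s^2 * (K d * (n * (1 + d^2)) + d^2)"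
      using K(1) by (intro mult_left_mono add_mono) simp_all
    moreover have "2 * (s^2 * d^2 * (K d * S d + 1)) = 2 * s^2 * (K d * (d^2 * S d) + d^2)"
      by (simp add: algebra_simps)
    ultimately show ?thesis using upper[OF d] by (simp only: mult.assoc)
  qed
  have "((\<lambda>d. 2 * s^2 * (K d * n * (1 + d^2) + d^2)) \<longlongrightarrow> 2 * s^2 * (1 * n * (1 + 0^2) + 0^2)) (at_right 0)"
    by (intro tendsto_intros K(2) tendsto_ident_at)
  moreover have "eventually (\<lambda>d. n + n' \<le> 2 * s^2 * (K d * n * (1 + d^2) + d^2)) (at_right 0)"
    using eventually_at_right_real[OF d0] by eventually_elim (auto intro: bound)
  ultimately have "n + n' \<le> 2 * s^2 * (1 * n * (1 + 0^2) + 0^2)"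
    by (rule tendsto_le[OF trivial_limit_at_right_real _ tendsto_const])
  then show ?thesis by simp
qed

section \<open>Expected degrees\<close>

locale poisson_pair =
  fixes M :: "'o measure" and Phi Psi :: "'o \<Rightarrow> pt set" and lam r :: real
  assumes prob_space: "prob_space M"
    and lam: "lam > 0" and r: "r > 0"
    and Phi: "poisson_counts M Phi 1"
    and Psi: "poisson_counts M Psi lam"
    and indep: "indep_counts M Phi Psi"
begin

abbreviation EN :: ennreal where
  "EN \<equiv> \<integral>\<^sup>+\<omega>. of_nat (deg_basic r (insert 0 (Phi \<omega>)) (Psi \<omega>)) \<partial>M"

abbreviation EN' :: ennreal where
  "EN' \<equiv> \<integral>\<^sup>+\<omega>. of_nat (deg_enh r (insert 0 (Phi \<omega>)) (Psi \<omega>)) \<partial>M"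

lemma locally_finite_Phi: "\<omega> \<in> space M \<Longrightarrow> locally_finite_pts (Phi \<omega>)"
  using Phi by (simp add: poisson_counts_def locally_finite_pts_def)

lemma locally_finite_Psi: "\<omega> \<in> space M \<Longrightarrow> locally_finite_pts (Psi \<omega>)"
  using Psi by (simp add: poisson_counts_def locally_finite_pts_def)

lemma EN_le_EN': "EN \<le> EN'"
  by (intro nn_integral_mono of_nat_mono deg_basic_le_deg_enh locally_finite_Phi)

lemma nn_integral_sum_cell_products:
  assumes d: "d > 0" and I: "finite I" and V: "\<And>ij. V ij \<in> sets lborel" "\<And>ij. bounded (V ij)"
  shows "(\<integral>\<^sup>+\<omega>. (\<Sum>ij\<in>I. F (cnt (Phi \<omega>) (grid_cell d ij)) * G (cnt (Psi \<omega>) (V ij))) \<partial>M)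
       = (\<Sum>ij\<in>I. (\<integral>\<^sup>+\<omega>. F (cnt (Phi \<omega>) (grid_cell d ij)) \<partial>M) * (\<integral>\<^sup>+\<omega>. G (cnt (Psi \<omega>) (V ij)) \<partial>M))"
  using prob_space Phi Psi lam
  by (subst nn_integral_sum)
     (auto intro!: borel_measurable_times_ennreal measurable_poisson_count grid_cell_borel bounded_grid_cell V
           sum.cong indep_counts_nn_integral_mult[OF prob_space indep])

lemma expected_deg_basic_ge:
  assumes d: "d > 0"
  shows "ennreal ((1 - exp (- (d^2))) *
           (\<Sum>ij\<in>cells_inside_disk d r. exp (- (lam * measure lborel (cell_outer_zone d ij))))) \<le> EN"
proof -
  let ?I = "cells_inside_disk d r"
  let ?F = "\<lambda>k::nat. of_bool (0 < k) :: ennreal" and ?G = "\<lambda>k::nat. of_bool (k = 0) :: ennreal"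
  have "ennreal ((1 - exp (- (d^2))) * (\<Sum>ij\<in>?I. exp (- (lam * measure lborel (cell_outer_zone d ij)))))
      = (\<Sum>ij\<in>?I. ennreal (1 - exp (- (d^2))) * ennreal (exp (- (lam * measure lborel (cell_outer_zone d ij)))))"
    by (simp add: sum_distrib_left ennreal_mult'[symmetric])
  also have "\<dots> = (\<Sum>ij\<in>?I. (\<integral>\<^sup>+\<omega>. ?F (cnt (Phi \<omega>) (grid_cell d ij)) \<partial>M) * (\<integral>\<^sup>+\<omega>. ?G (cnt (Psi \<omega>) (cell_outer_zone d ij)) \<partial>M))"
    using nn_integral_poisson_occupied[OF prob_space Phi _ grid_cell_borel bounded_grid_cell]
      nn_integral_poisson_void[OF prob_space Psi _ cell_outer_zone_borel] lam
    by (simp add: measure_grid_cell[OF d])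
  also have "\<dots> = (\<integral>\<^sup>+\<omega>. (\<Sum>ij\<in>?I. ?F (cnt (Phi \<omega>) (grid_cell d ij)) * ?G (cnt (Psi \<omega>) (cell_outer_zone d ij))) \<partial>M)"
    by (rule nn_integral_sum_cell_products[OF d finite_cells_inside_disk[OF d] cell_outer_zone_borel, symmetric])
  also have "\<dots> \<le> EN"
  proof (rule nn_integral_mono)
    fix \<omega> assume \<omega>: "\<omega> \<in> space M"
    have "(\<Sum>ij\<in>?I. ?F (cnt (Phi \<omega>) (grid_cell d ij)) * ?G (cnt (Psi \<omega>) (cell_outer_zone d ij)))
        = (\<Sum>ij\<in>?I. of_bool (Phi \<omega> \<inter> grid_cell d ij \<noteq> {} \<and> Psi \<omega> \<inter> cell_outer_zone d ij = {}))"
      using locally_finite_Phi[OF \<omega>] locally_finite_Psi[OF \<omega>]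
      by (intro sum.cong refl)
         (simp add: of_bool_conj cnt_pos_iff cnt_eq_0_iff bounded_grid_cell cell_outer_zone_borel)
    also have "\<dots> = of_nat (card {ij \<in> ?I. Phi \<omega> \<inter> grid_cell d ij \<noteq> {} \<and> Psi \<omega> \<inter> cell_outer_zone d ij = {}})"
      by (simp add: finite_cells_inside_disk[OF d] Int_def conj_commute)
    also have "\<dots> \<le> of_nat (deg_basic r (insert 0 (Phi \<omega>)) (Psi \<omega>))"
      by (intro of_nat_mono card_occupied_cells_le_deg_basic d locally_finite_Phi \<omega>)
    finally show "(\<Sum>ij\<in>?I. ?F (cnt (Phi \<omega>) (grid_cell d ij)) * ?G (cnt (Psi \<omega>) (cell_outer_zone d ij)))
        \<le> of_nat (deg_basic r (insert 0 (Phi \<omega>)) (Psi \<omega>))" .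
  qed
  finally show ?thesis .
qed

lemma nn_integral_count_in_clear_cells:
  assumes d: "d > 0" and V: "\<And>ij. V ij \<in> sets lborel" "\<And>ij. bounded (V ij)"
  shows "(\<integral>\<^sup>+\<omega>. count_in_clear_cells d r (Phi \<omega>) (Psi \<omega>) V \<partial>M)
       = ennreal (\<Sum>ij\<in>cells_meeting_disk d r. d^2 * exp (- (lam * measure lborel (V ij))))"
  using nn_integral_poisson_count[OF prob_space Phi _ grid_cell_borel bounded_grid_cell]
    nn_integral_poisson_void[OF prob_space Psi _ V] lam
  unfolding count_in_clear_cells_def
  by (subst nn_integral_sum_cell_products[OF d finite_cells_meeting_disk[OF d] V,
        where F = of_nat and G = "\<lambda>k. of_bool (k = 0)"])
     (simp add: measure_grid_cell[OF d] ennreal_mult'[symmetric])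

lemma measurable_count_in_clear_cells:
  assumes "\<And>ij. V ij \<in> sets lborel" "\<And>ij. bounded (V ij)"
  shows "(\<lambda>\<omega>. count_in_clear_cells d r (Phi \<omega>) (Psi \<omega>) V) \<in> borel_measurable M"
  unfolding count_in_clear_cells_def using prob_space Phi Psi lam assms
  by (intro borel_measurable_sum borel_measurable_times_ennreal measurable_poisson_count
      grid_cell_borel bounded_grid_cell) auto

lemma expected_deg_sum_le:
  assumes d: "d > 0"
  shows "EN + EN' \<le> ennreal (2 * (\<Sum>ij\<in>cells_meeting_disk d r.
                        d^2 * exp (- (lam * (pi * (max 0 (cell_inner_radius d ij))^2)))))"
proof -
  let ?C = "\<lambda>V \<omega>. count_in_clear_cells d r (Phi \<omega>) (Psi \<omega>) V"
  let ?V0 = "\<lambda>ij. ball 0 (cell_inner_radius d ij)"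
    and ?Vc = "\<lambda>ij. ball (grid_corner d ij) (cell_inner_radius d ij)"
  have "EN + EN' \<le> (\<integral>\<^sup>+\<omega>. of_nat (deg_basic r (insert 0 (Phi \<omega>)) (Psi \<omega>))
                         + of_nat (deg_enh r (insert 0 (Phi \<omega>)) (Psi \<omega>)) \<partial>M)"
    by (rule nn_integral_superadditive)
  also have "\<dots> \<le> (\<integral>\<^sup>+\<omega>. ?C ?V0 \<omega> + ?C ?Vc \<omega> \<partial>M)"
    by (intro nn_integral_mono deg_basic_add_deg_enh_le_count_in_clear_cells d
        locally_finite_Phi locally_finite_Psi)
  also have "\<dots> = (\<integral>\<^sup>+\<omega>. ?C ?V0 \<omega> \<partial>M) + (\<integral>\<^sup>+\<omega>. ?C ?Vc \<omega> \<partial>M)"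
    by (intro nn_integral_add measurable_count_in_clear_cells) auto
  also have "\<dots> = ennreal (2 * (\<Sum>ij\<in>cells_meeting_disk d r.
                        d^2 * exp (- (lam * (pi * (max 0 (cell_inner_radius d ij))^2)))))"
    by (simp add: nn_integral_count_in_clear_cells[OF d] measure_ball_pt ennreal_plus[symmetric]
        sum_nonneg del: ennreal_plus)
  finally show ?thesis .
qed

lemma EN_ge_outer_weight_sum:
  assumes d: "d > 0"
  shows "ennreal ((1 - exp (- (d^2))) * outer_weight_sum lam r d) \<le> EN"
proof -
  have "exp (- (lam * two_disk_area_coeff * (cell_outer_radius d ij)^2))
      \<le> exp (- (lam * measure lborel (cell_outer_zone d ij)))" for ij
    using measure_cell_outer_zone_le[OF d, of ij] lam by (simp add: mult.assoc)
  then have "(1 - exp (- (d^2))) * outer_weight_sum lam r d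
      \<le> (1 - exp (- (d^2))) * (\<Sum>ij\<in>cells_inside_disk d r. exp (- (lam * measure lborel (cell_outer_zone d ij))))"
    unfolding outer_weight_sum_def by (intro mult_left_mono sum_mono) auto
  then show ?thesis
    by (rule ennreal_leI[THEN order_trans]) (rule expected_deg_basic_ge[OF d])
qed

lemma EN_add_EN'_le_outer_weight_sum:
  assumes d: "d > 0" and dr: "4 * d \<le> r - r / scale_factor"
  shows "EN + EN' \<le> ennreal (2 * (scale_factor^2 * d^2 *
           (exp (lam * two_disk_area_coeff * (16 * d * r + 64 * d^2)) * outer_weight_sum lam r d + 1)))"
proof -
  have "scale_factor * d > 0" using scale_factor_gt_1 d by simp
  then have "EN + EN' \<le> ennreal (2 * (\<Sum>ij\<in>cells_meeting_disk (scale_factor * d) r.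
      (scale_factor * d)^2 * exp (- (lam * (pi * (max 0 (cell_inner_radius (scale_factor * d) ij))^2)))))"
    by (rule expected_deg_sum_le)
  also have "\<dots> \<le> ennreal (2 * (scale_factor^2 * d^2 *
           (exp (lam * two_disk_area_coeff * (16 * d * r + 64 * d^2)) * outer_weight_sum lam r d + 1)))"
    unfolding outer_weight_sum_def using sum_scaled_inner_le[OF d dr less_imp_le[OF lam]]
    by (intro ennreal_leI mult_left_mono) simp_all
  finally show ?thesis .
qed

lemma EN_add_EN'_le: "EN + EN' \<le> ennreal (2 * scale_factor^2) * EN"
  and EN_pos: "0 < EN" and EN'_finite: "EN' < top"
proof -
  define d0 where "d0 = (r - r / scale_factor) / 4"
  let ?K = "\<lambda>d. exp (lam * two_disk_area_coeff * (16 * d * r + 64 * d^2))"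
  have d0: "d0 > 0" using scale_factor_gt_1 r by (simp add: d0_def divide_less_eq)
  have upper: "EN + EN' \<le> ennreal (2 * (scale_factor^2 * d^2 * (?K d * outer_weight_sum lam r d + 1)))"
    if "0 < d" "d \<le> d0" for d
    using that by (intro EN_add_EN'_le_outer_weight_sum) (simp_all add: d0_def)
  then have "EN + EN' < top" using d0 ennreal_less_top order_le_less_trans by blast
  then have finite: "EN < top" "EN' < top" by simp_all
  then show "EN' < top" by simp
  define n where "n = enn2real EN"
  define n' where "n' = enn2real EN'"
  have n: "EN = ennreal n" "EN' = ennreal n'" "n \<ge> 0" "n' \<ge> 0"
    using finite by (simp_all add: n_def n'_def)
  have S: "outer_weight_sum lam r d \<ge> 0" for d
    unfolding outer_weight_sum_def by (intro sum_nonneg) simp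
  have lower: "(1 - exp (- (d^2))) * outer_weight_sum lam r d \<le> n" if "0 < d" for d
    using EN_ge_outer_weight_sum[OF that] n(1,3) by simp
  have "0 < (1 - exp (- (d0^2))) * outer_weight_sum lam r d0"
    using d0 scale_factor_gt_1 r by (intro mult_pos_pos outer_weight_sum_pos) (auto simp: d0_def)
  then have "n > 0" using lower[OF d0] by linarith
  then show "0 < EN" using n(1) by simp
  have "n + n' \<le> 2 * scale_factor^2 * n"
  proof (rule add_le_of_mesh_bounds[OF d0 S])
    have "((\<lambda>d. ?K d) \<longlongrightarrow> ?K 0) (at_right 0)" by (intro tendsto_intros tendsto_ident_at)
    then show "((\<lambda>d. ?K d) \<longlongrightarrow> 1) (at_right 0)" by simp
    show "n + n' \<le> 2 * (scale_factor^2 * d^2 * (?K d * outer_weight_sum lam r d + 1))"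
      if "0 < d" "d \<le> d0" for d
      using upper[OF that] n S by (simp add: ennreal_plus[symmetric] del: ennreal_plus)
  qed (use lower in auto)
  then show "EN + EN' \<le> ennreal (2 * scale_factor^2) * EN"
    using n by (simp add: ennreal_mult'[symmetric] ennreal_plus[symmetric] del: ennreal_plus)
qed

end

theorem fact4:
  fixes M :: "'o measure" and Phi0 Psi :: "'o \<Rightarrow> pt set" and lam r :: real
  assumes "prob_space M"
    and "lam > 0" and "r > 0"
    and "poisson_counts M Phi0 1"
    and "poisson_counts M Psi lam"
    and "indep_counts M Phi0 Psi"
  shows "(\<integral>\<^sup>+\<omega>. of_nat (deg_basic r (insert 0 (Phi0 \<omega>)) (Psi \<omega>)) \<partial>M)
           / (\<integral>\<^sup>+\<omega>. of_nat (deg_enh r (insert 0 (Phi0 \<omega>)) (Psi \<omega>)) \<partial>M)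
         \<ge> ennreal (3 * pi / (5 * pi + 3 * sqrt 3))"
proof -
  interpret poisson_pair M Phi0 Psi lam r
    by (rule poisson_pair.intro[OF assms])
  have "ennreal (1 / (2 * scale_factor^2 - 1)) \<le> EN / EN'"
    using EN_add_EN'_le EN_pos EN_le_EN' EN'_finite by (rule ennreal_inverse_le_divide_of_add_le)
  then show ?thesis by (simp add: inverse_two_scale_factor_sq_minus_1)
qed

end
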